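(* Let $n_1,n_2,n^*_1,n^*_2$ be integers with $1\le n_1\le n^*_1\le n^*_2\le n_2$, $n=n_1+n_2$, $n^*=n^*_1+n^*_2$. Let $\psi_1$ be an Archimedean generator with $\phi_1=\psi_1^{-1}$, and $\lambda_1\ge\lambda_2>0$. Let $X_{n:n}(n_1,n_2)$ denote the maximum of $n$ dependent nonnegative random variables sharing an Archimedean copula with generator $\psi_1$, of which $n_1$ have distribution function $x\mapsto F_1(\lambda_1x)$ and $n_2$ have distribution function $x\mapsto F_2(\lambda_2x)$; and let $X_{n^*:n^*}(n^*_1,n^*_2)$ denote the maximum of $n^*$ dependent nonnegative random variables sharing an Archimedean copula with the same generator $\psi_1$, of which $n^*_1$ have distribution function $x\mapsto F_1(\lambda_1x)$ and $n^*_2$ have distribution function $x\mapsto F_2(\lambda_2x)$. Suppose $F_1(x)\ge F_2(x)$ for all $x$. Then $$(n_1,n_2)\succeq_{w}(n^*_1,n^*_2)\ \Longrightarrow\ X_{n^*:n^*}(n^*_1,n^*_2)\le_{st}X_{n:n}(n_1,n_2).$$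
   Context: Archimedean copula: a generator is a continuous nonincreasing $\psi:[0,\infty)\to[0,1]$ with $\psi(0)=1$, $\psi(\infty)=0$, which is $m$-monotone so that it generates an $m$-dimensional copula; $\phi=\psi^{-1}$. Random variables $Z_1,\dots,Z_m$ with marginal distribution functions $G_i$ share an Archimedean copula with generator $\psi$ if $P(Z_1\le z_1,\dots,Z_m\le z_m)=\psi\big(\sum_i\phi(G_i(z_i))\big)$. $F_1,F_2$ are baseline distribution functions of nonnegative random variables. For $\boldsymbol a,\boldsymbol b\in\mathbb R^k$ with increasingly ordered coordinates $a_{(1)}\le\dots\le a_{(k)}$: $\boldsymbol a\succeq_{w}\boldsymbol b$ means $\sum_{i=l}^k a_{(i)}\ge\sum_{i=l}^k b_{(i)}$ for all $l=1,\dots,k$. $U\le_{st}V$ means $P(U>x)\le P(V>x)$ for all $x$. *)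

theory Defs
  imports "HOL-Probability.Probability"
begin

definition m_monotone :: "nat \<Rightarrow> (real \<Rightarrow> real) \<Rightarrow> bool" where
  "m_monotone m \<psi> \<longleftrightarrow> 2 \<le> m \<and>
     (\<forall>k<m-2. \<forall>x>0. (deriv ^^ k) \<psi> differentiable (at x)) \<and>
     (\<forall>k\<le>m-2. \<forall>x>0. 0 \<le> (-1) ^ k * (deriv ^^ k) \<psi> x) \<and>
     (\<forall>x y. 0 < x \<longrightarrow> x \<le> y \<longrightarrow>
        (-1) ^ (m-2) * (deriv ^^ (m-2)) \<psi> y \<le> (-1) ^ (m-2) * (deriv ^^ (m-2)) \<psi> x) \<and>
     convex_on {0<..} (\<lambda>x. (-1) ^ (m-2) * (deriv ^^ (m-2)) \<psi> x)"

definition archimedean_generator :: "nat \<Rightarrow> (real \<Rightarrow> real) \<Rightarrow> bool" where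
  "archimedean_generator m \<psi> \<longleftrightarrow>
     continuous_on {0..} \<psi> \<and>
     (\<forall>x\<ge>0. 0 \<le> \<psi> x \<and> \<psi> x \<le> 1) \<and>
     (\<forall>x y. 0 \<le> x \<longrightarrow> x \<le> y \<longrightarrow> \<psi> y \<le> \<psi> x) \<and>
     \<psi> 0 = 1 \<and> (\<psi> \<longlongrightarrow> 0) at_top \<and>
     m_monotone m \<psi>"

text \<open>phi = psi^{-1} (generalized inverse; for u in (0,1] this is the genuine inverse
  value: psi (gen_inv psi u) = u).\<close>
definition gen_inv :: "(real \<Rightarrow> real) \<Rightarrow> real \<Rightarrow> real" where
  "gen_inv \<psi> u = Inf {x. 0 \<le> x \<and> \<psi> x \<le> u}"

definition nonneg_cdf :: "(real \<Rightarrow> real) \<Rightarrow> bool" where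
  "nonneg_cdf F \<longleftrightarrow> mono F \<and> (\<forall>x. continuous (at_right x) F) \<and>
     (\<forall>x<0. F x = 0) \<and> (F \<longlongrightarrow> 1) at_top"

text \<open>The copula
  formula is required at points where all marginal values are positive; at other points
  the joint probability is 0 automatically.\<close>
definition shares_archimedean_copula ::
  "'a measure \<Rightarrow> (real \<Rightarrow> real) \<Rightarrow> nat \<Rightarrow> (nat \<Rightarrow> 'a \<Rightarrow> real) \<Rightarrow> (nat \<Rightarrow> real \<Rightarrow> real) \<Rightarrow> bool"
  where
  "shares_archimedean_copula M \<psi> m Z G \<longleftrightarrow>
     (\<forall>i<m. Z i \<in> borel_measurable M) \<and>
     (\<forall>i<m. \<forall>x. measure M {\<omega>\<in>space M. Z i \<omega> \<le> x} = G i x) \<and>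
     (\<forall>z. (\<forall>i<m. 0 < G i (z i)) \<longrightarrow>
        measure M {\<omega>\<in>space M. \<forall>i<m. Z i \<omega> \<le> z i}
          = \<psi> (\<Sum>i<m. gen_inv \<psi> (G i (z i))))"

definition weakly_supermajorizes :: "real list \<Rightarrow> real list \<Rightarrow> bool" where
  "weakly_supermajorizes a b \<longleftrightarrow> length a = length b \<and>
     (\<forall>l<length a. (\<Sum>i=l..<length a. sort a ! i) \<ge> (\<Sum>i=l..<length b. sort b ! i))"

definition sample_max :: "nat \<Rightarrow> (nat \<Rightarrow> 'a \<Rightarrow> real) \<Rightarrow> 'a \<Rightarrow> real" where
  "sample_max m Z \<omega> = Max ((\<lambda>i. Z i \<omega>) ` {..<m})"

end

theory Submission
  imports Defs
begin

text \<open>At a point x put a = F1 (l1 x) and b = F2 (l2 x); then b \<le> a, so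
  \<phi> a \<le> \<phi> b for the antitone generalized inverse \<phi>, and the copula gives
  P(max Z \<le> x) = \<psi>(n1 \<phi> a + n2 \<phi> b).  Weak supermajorization of the sorted pairs
  yields n1' + n2' \<le> n1 + n2, which together with n1 \<le> n1' moves weight from \<phi> b to
  the smaller \<phi> a: n1' \<phi> a + n2' \<phi> b \<le> n1 \<phi> a + n2 \<phi> b.  Since \<psi> is antitone,
  the distribution function of the smaller sample maximum is the larger one.  If b = 0 the
  copula formula does not apply, but then already P(max Z \<le> x) \<le> b = 0.\<close>

lemma gen_inv_set_nonempty:
  fixes \<psi> :: "real \<Rightarrow> real"
  assumes "(\<psi> \<longlongrightarrow> 0) at_top" "0 < u"
  shows "{x. 0 \<le> x \<and> \<psi> x \<le> u} \<noteq> {}"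
proof -
  have "eventually (\<lambda>x. \<psi> x < u) at_top"
    using assms by (intro order_tendstoD(2)) auto
  then obtain x0 where "\<And>x. x \<ge> x0 \<Longrightarrow> \<psi> x < u"
    by (auto simp: eventually_at_top_linorder)
  then have "\<psi> (max x0 0) \<le> u"
    by (simp add: less_imp_le)
  then show ?thesis
    by (intro notI) (metis (mono_tags) empty_Collect_eq max.cobounded2)
qed

lemma gen_inv_nonneg:
  assumes "(\<psi> \<longlongrightarrow> 0) at_top" "0 < u"
  shows "0 \<le> gen_inv \<psi> u"
  unfolding gen_inv_def using gen_inv_set_nonempty[OF assms] by (intro cInf_greatest) auto

lemma gen_inv_antimono:
  assumes "(\<psi> \<longlongrightarrow> 0) at_top" "0 < u" "u \<le> v"
  shows "gen_inv \<psi> v \<le> gen_inv \<psi> u"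
  unfolding gen_inv_def
proof (rule cInf_superset_mono)
  show "{x. 0 \<le> x \<and> \<psi> x \<le> u} \<noteq> {}"
    using gen_inv_set_nonempty[OF assms(1,2)] .
  show "bdd_below {x. 0 \<le> x \<and> \<psi> x \<le> v}"
    by (rule bdd_belowI[of _ 0]) simp
  show "{x. 0 \<le> x \<and> \<psi> x \<le> u} \<subseteq> {x. 0 \<le> x \<and> \<psi> x \<le> v}"
    using assms(3) by auto
qed

lemma archimedean_generator_tendsto_0:
  "archimedean_generator m \<psi> \<Longrightarrow> (\<psi> \<longlongrightarrow> 0) at_top"
  unfolding archimedean_generator_def by blast

lemma archimedean_generator_antimono:
  "archimedean_generator m \<psi> \<Longrightarrow> 0 \<le> x \<Longrightarrow> x \<le> y \<Longrightarrow> \<psi> y \<le> \<psi> x"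
  unfolding archimedean_generator_def by blast

lemma nonneg_cdf_nonneg:
  assumes "nonneg_cdf F"
  shows "0 \<le> F x"
proof -
  have "mono F"
    using assms by (simp add: nonneg_cdf_def)
  then have "F (min x (-1)) \<le> F x"
    by (rule monoD) simp
  moreover have "F (min x (-1)) = 0"
    using assms unfolding nonneg_cdf_def by simp
  ultimately show ?thesis
    by simp
qed

lemma nonneg_cdf_scaled_le:
  assumes "nonneg_cdf F1" "nonneg_cdf F2" "\<forall>x. F2 x \<le> F1 x" "0 < l2" "l2 \<le> l1"
  shows "F2 (l2 * x) \<le> F1 (l1 * x)"
proof (cases "0 \<le> x")
  case True
  then have "F1 (l2 * x) \<le> F1 (l1 * x)"
    using assms(1,5) by (simp add: nonneg_cdf_def monoD mult_right_mono)
  then show ?thesis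
    using assms(3) order_trans by blast
next
  case False
  then have "F2 (l2 * x) = 0"
    using assms(2,4) by (simp add: nonneg_cdf_def mult_pos_neg)
  then show ?thesis
    using nonneg_cdf_nonneg[OF assms(1)] by simp
qed

lemma weakly_supermajorizes_sum_list_le:
  assumes "weakly_supermajorizes a b"
  shows "sum_list b \<le> sum_list a"
proof (cases "a = []")
  case True
  then show ?thesis
    using assms by (simp add: weakly_supermajorizes_def)
next
  case False
  then have "(\<Sum>i=0..<length b. sort b ! i) \<le> (\<Sum>i=0..<length a. sort a ! i)"
    using assms unfolding weakly_supermajorizes_def by auto
  moreover have "sum_list (sort xs) = sum_list xs" for xs :: "real list"
    by (metis mset_sort sum_mset_sum_list)
  ultimately show ?thesis
    by (simp add: sum_list_sum_nth)
qed

lemma measurable_all_le: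
  fixes m :: nat
  assumes "\<And>i. i < m \<Longrightarrow> Z i \<in> borel_measurable M"
  shows "{\<omega>\<in>space M. \<forall>i<m. Z i \<omega> \<le> (x::real)} \<in> sets M"
proof -
  have "{\<omega>\<in>space M. \<forall>i\<in>{..<m}. Z i \<omega> \<le> x} \<in> sets M"
  proof (rule sets.sets_Collect_finite_All)
    show "finite {..<m}" by (rule finite_lessThan)
    fix i assume "i \<in> {..<m}"
    then have [measurable]: "Z i \<in> borel_measurable M"
      using assms by simp
    show "{\<omega>\<in>space M. Z i \<omega> \<le> x} \<in> sets M"
      by measurable
  qed
  then show ?thesis
    unfolding Ball_def lessThan_iff .
qed

lemma (in prob_space) prob_sample_max_gt:
  assumes "0 < m" "\<And>i. i < m \<Longrightarrow> Z i \<in> borel_measurable M"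
  shows "prob {\<omega>\<in>space M. sample_max m Z \<omega> > x} = 1 - prob {\<omega>\<in>space M. \<forall>i<m. Z i \<omega> \<le> x}"
proof -
  have "{\<omega>\<in>space M. sample_max m Z \<omega> > x} = space M - {\<omega>\<in>space M. \<forall>i<m. Z i \<omega> \<le> x}"
    unfolding sample_max_def using assms(1) by (subst Max_gr_iff) (auto simp: not_le)
  then show ?thesis
    using prob_compl[OF measurable_all_le[OF assms(2)]] by simp
qed

lemma shares_archimedean_copula_measurable:
  "shares_archimedean_copula M \<psi> m Z G \<Longrightarrow> i < m \<Longrightarrow> Z i \<in> borel_measurable M"
  unfolding shares_archimedean_copula_def by blast

lemma shares_archimedean_copula_marginal:
  "shares_archimedean_copula M \<psi> m Z G \<Longrightarrow> i < m \<Longrightarrow>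
     measure M {\<omega>\<in>space M. Z i \<omega> \<le> x} = G i x"
  unfolding shares_archimedean_copula_def by blast

lemma shares_archimedean_copula_diagonal:
  assumes "shares_archimedean_copula M \<psi> m Z G" "\<And>i. i < m \<Longrightarrow> 0 < G i x"
  shows "measure M {\<omega>\<in>space M. \<forall>i<m. Z i \<omega> \<le> x} = \<psi> (\<Sum>i<m. gen_inv \<psi> (G i x))"
  using assms unfolding shares_archimedean_copula_def by (auto dest: spec[of _ "\<lambda>_. x"])

lemma shares_archimedean_copula_two_groups_diagonal:
  assumes "shares_archimedean_copula M \<psi> (p + q) Z (\<lambda>i x. if i < p then G1 x else G2 x)"
    and "0 < G1 x" "0 < G2 x"
  shows "measure M {\<omega>\<in>space M. \<forall>i<p+q. Z i \<omega> \<le> x}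
           = \<psi> (real p * gen_inv \<psi> (G1 x) + real q * gen_inv \<psi> (G2 x))"
proof -
  have "(\<Sum>i<p+q. gen_inv \<psi> (if i < p then G1 x else G2 x))
          = real p * gen_inv \<psi> (G1 x) + real q * gen_inv \<psi> (G2 x)"
    by (induction q) (auto simp: algebra_simps)
  then show ?thesis
    using shares_archimedean_copula_diagonal[OF assms(1)] assms(2,3) by simp
qed

lemma weighted_sum_shift_le:
  fixes u v :: real
  assumes "0 \<le> u" "u \<le> v" "p \<le> p'" "p' + q' \<le> p + q"
  shows "real p' * u + real q' * v \<le> real p * u + real q * v"
proof -
  have "real (p' - p) * u \<le> real (p' - p) * v"
    using assms(2) by (simp add: mult_left_mono)
  also have "\<dots> \<le> real (q - q') * v"
    using assms by (intro mult_right_mono) auto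
  finally show ?thesis
    using assms(3,4) by (simp add: of_nat_diff algebra_simps)
qed

lemma shares_archimedean_copula_two_groups_cdf_le:
  assumes gen: "archimedean_generator m \<psi>"
    and M: "prob_space M" "shares_archimedean_copula M \<psi> (p + q) Z (\<lambda>i x. if i < p then G1 x else G2 x)"
    and N: "shares_archimedean_copula N \<psi> (p' + q') Y (\<lambda>i x. if i < p' then G1 x else G2 x)"
    and "0 \<le> G2 x" "G2 x \<le> G1 x" "0 < q" "p \<le> p'" "p' + q' \<le> p + q"
  shows "measure M {\<omega>\<in>space M. \<forall>i<p+q. Z i \<omega> \<le> x} \<le> measure N {\<omega>\<in>space N. \<forall>i<p'+q'. Y i \<omega> \<le> x}"
proof (cases "G2 x = 0")
  case True
  interpret prob_space M by (fact M(1))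
  have "prob {\<omega>\<in>space M. \<forall>i<p+q. Z i \<omega> \<le> x} \<le> prob {\<omega>\<in>space M. Z p \<omega> \<le> x}"
    using \<open>0 < q\<close> shares_archimedean_copula_measurable[OF M(2)]
    by (intro finite_measure_mono) auto
  also have "\<dots> = 0"
    using shares_archimedean_copula_marginal[OF M(2), of p] \<open>0 < q\<close> True by simp
  finally show ?thesis
    by (meson measure_nonneg order_trans)
next
  case False
  have lim: "(\<psi> \<longlongrightarrow> 0) at_top"
    by (rule archimedean_generator_tendsto_0[OF gen])
  have pos: "0 < G2 x" "0 < G1 x"
    using False assms(5,6) by auto
  have "measure M {\<omega>\<in>space M. \<forall>i<p+q. Z i \<omega> \<le> x}
          = \<psi> (real p * gen_inv \<psi> (G1 x) + real q * gen_inv \<psi> (G2 x))"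
    using shares_archimedean_copula_two_groups_diagonal[OF M(2)] pos by simp
  also have "\<dots> \<le> \<psi> (real p' * gen_inv \<psi> (G1 x) + real q' * gen_inv \<psi> (G2 x))"
    using gen_inv_nonneg[OF lim] gen_inv_antimono[OF lim] pos assms(6,8,9)
    by (intro archimedean_generator_antimono[OF gen] weighted_sum_shift_le add_nonneg_nonneg
        mult_nonneg_nonneg) auto
  also have "\<dots> = measure N {\<omega>\<in>space N. \<forall>i<p'+q'. Y i \<omega> \<le> x}"
    using shares_archimedean_copula_two_groups_diagonal[OF N] pos by simp
  finally show ?thesis .
qed

theorem theorem3p2:
  fixes n1 n2 n1' n2' :: nat
    and \<psi> :: "real \<Rightarrow> real"
    and l1 l2 :: real
    and F1 F2 :: "real \<Rightarrow> real"
    and M :: "'a measure" and Z :: "nat \<Rightarrow> 'a \<Rightarrow> real"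
    and N :: "'b measure" and Y :: "nat \<Rightarrow> 'b \<Rightarrow> real"
  assumes "1 \<le> n1" and "n1 \<le> n1'" and "n1' \<le> n2'" and "n2' \<le> n2"
    and "archimedean_generator (n1 + n2) \<psi>"
    and "l2 > 0" and "l1 \<ge> l2"
    and "nonneg_cdf F1" and "nonneg_cdf F2"
    and "\<forall>x. F1 x \<ge> F2 x"
    and "prob_space M"
    and "shares_archimedean_copula M \<psi> (n1 + n2) Z
           (\<lambda>i x. if i < n1 then F1 (l1 * x) else F2 (l2 * x))"
    and "prob_space N"
    and "shares_archimedean_copula N \<psi> (n1' + n2') Y
           (\<lambda>i x. if i < n1' then F1 (l1 * x) else F2 (l2 * x))"
  shows "weakly_supermajorizes [real n1, real n2] [real n1', real n2'] \<Longrightarrow>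
         (\<forall>x. measure N {\<omega>\<in>space N. sample_max (n1' + n2') Y \<omega> > x}
              \<le> measure M {\<omega>\<in>space M. sample_max (n1 + n2) Z \<omega> > x})"
proof (intro allI)
  fix x
  assume "weakly_supermajorizes [real n1, real n2] [real n1', real n2']"
  then have total: "n1' + n2' \<le> n1 + n2"
    using weakly_supermajorizes_sum_list_le by fastforce
  have "F2 (l2 * x) \<le> F1 (l1 * x)"
    by (rule nonneg_cdf_scaled_le[OF assms(8,9)]) (use assms(6,7,10) in auto)
  then have cdf_le: "measure M {\<omega>\<in>space M. \<forall>i<n1+n2. Z i \<omega> \<le> x}
                       \<le> measure N {\<omega>\<in>space N. \<forall>i<n1'+n2'. Y i \<omega> \<le> x}"
    using assms(1-4) total nonneg_cdf_nonneg[OF assms(9)]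
    by (intro shares_archimedean_copula_two_groups_cdf_le[OF assms(5,11,12,14)]) auto
  have "measure M {\<omega>\<in>space M. sample_max (n1 + n2) Z \<omega> > x}
          = 1 - measure M {\<omega>\<in>space M. \<forall>i<n1+n2. Z i \<omega> \<le> x}"
    using assms(1) shares_archimedean_copula_measurable[OF assms(12)]
    by (intro prob_space.prob_sample_max_gt[OF assms(11)]) auto
  moreover have "measure N {\<omega>\<in>space N. sample_max (n1' + n2') Y \<omega> > x}
          = 1 - measure N {\<omega>\<in>space N. \<forall>i<n1'+n2'. Y i \<omega> \<le> x}"
    using assms(1,2) shares_archimedean_copula_measurable[OF assms(14)]
    by (intro prob_space.prob_sample_max_gt[OF assms(13)]) auto
  ultimately show "measure N {\<omega>\<in>space N. sample_max (n1' + n2') Y \<omega> > x}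
                     \<le> measure M {\<omega>\<in>space M. sample_max (n1 + n2) Z \<omega> > x}"
    using cdf_le by linarith
qed

end
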